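(* In the setting below, for every $m\in\mathbb N$ with $1\le m\le \ell N$, $$\mathbb E\,S(\widetilde{a_m})\le(8+16C_G)\,\mathbb E\,S(a_m).$$
   Context: Let $n,N\in\mathbb N$, $I=\{1,\dots,n\}$, $J=\{1,\dots,N\}$, $G$ a nonempty finite set of maps $I\to J$, $\mathbb P$ the normalized counting measure on $G$ ($\mathbb P(E)=|E|/|G|$) and $\mathbb E$ its expectation. Assume there is a constant $C_G\ge1$ such that for all $i\in I,j\in J$, $\mathbb P(g(i)=j)=1/N$, and for all pairs $(i_1,j_1)\ne(i_2,j_2)$ in $I\times J$, $\mathbb P(g(i_1)=j_1,g(i_2)=j_2)\le C_G/N^2$. Fix an integer $1\le\ell\le n$ and a matrix $a\in\mathbb R^{n\times N}$ with non-negative entries, and let $h:\{1,\dots,nN\}\to I\times J$ be a bijection with $a(h(j))\ge a(h(j+1))$ for $1\le j<\ell N$ and $a(h(j))=0$ for $\ell N<j\le nN$ (for a matrix $b$, $b(i,j)=b_{ij}$). Let $\mathcal A_h$ be the set of non-negative $n\times N$ matrices $b$ with $b(h(j))\ge b(h(j+1))$ for $1\le j<\ell N$ and $b(h(j))=0$ for $\ell N<j\le nN$. For $b\in\mathcal A_h$ let $\widetilde b$ be the matrix with $\widetilde b(h(j))=\big(\frac1{\ell N}\sum_{i=1}^{\ell N}b(h(i))\big)\mathbb 1_{\{1,\dots,\ell N\}}(j)$ for $1\le j\le nN$. For $1\le m\le nN$ let $a_m$ be the matrix with $a_m(h(k))=\mathbb 1_{\{1,\dots,m\}}(k)$. For $b\in\mathcal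 A_h$ and $g\in G$ let $S_k(b)(g)$ be the $k$-th largest (with multiplicity) of the numbers $b_{1g(1)},\dots,b_{ng(n)}$, and $S(b)(g)=\sum_{k=1}^{\ell}S_k(b)(g)$. *)

theory Defs
  imports Complex_Main "HOL-Library.FuncSet"
begin

(* Matrices are functions on index pairs (i,j); only entries in I x J matter. *)

definition expect :: "(nat \<Rightarrow> nat) set \<Rightarrow> ((nat \<Rightarrow> nat) \<Rightarrow> real) \<Rightarrow> real" where
  "expect G X = (\<Sum>g\<in>G. X g) / real (card G)"

definition prob :: "(nat \<Rightarrow> nat) set \<Rightarrow> ((nat \<Rightarrow> nat) \<Rightarrow> bool) \<Rightarrow> real" where
  "prob G P = real (card {g\<in>G. P g}) / real (card G)"

definition sorted_vals :: "nat \<Rightarrow> (nat \<times> nat \<Rightarrow> real) \<Rightarrow> (nat \<Rightarrow> nat) \<Rightarrow> real list" where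
  "sorted_vals n b g = rev (sort (map (\<lambda>i. b (i, g i)) [1..<n+1]))"

definition Sk :: "nat \<Rightarrow> nat \<Rightarrow> (nat \<times> nat \<Rightarrow> real) \<Rightarrow> (nat \<Rightarrow> nat) \<Rightarrow> real" where
  "Sk n k b g = sorted_vals n b g ! (k - 1)"

definition S :: "nat \<Rightarrow> nat \<Rightarrow> (nat \<times> nat \<Rightarrow> real) \<Rightarrow> (nat \<Rightarrow> nat) \<Rightarrow> real" where
  "S n l b g = (\<Sum>k=1..l. Sk n k b g)"

definition tilde :: "nat \<Rightarrow> (nat \<Rightarrow> nat \<times> nat) \<Rightarrow> (nat \<times> nat \<Rightarrow> real) \<Rightarrow> (nat \<times> nat \<Rightarrow> real)" where
  "tilde L h b = (\<lambda>p. if p \<in> h ` {1..L} then (\<Sum>i=1..L. b (h i)) / real L else 0)"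

definition amat :: "(nat \<Rightarrow> nat \<times> nat) \<Rightarrow> nat \<Rightarrow> (nat \<times> nat \<Rightarrow> real)" where
  "amat h m = (\<lambda>p. if p \<in> h ` {1..m} then 1 else 0)"

end

theory Submission
  imports Defs "HOL-Library.Multiset"
begin

text \<open>Both matrices are multiples of indicator matrices: \<open>b = tilde (lN) h a\<^sub>m\<close> is \<open>m/(lN)\<close> on
  \<open>E = h{1..lN}\<close> and \<open>a\<^sub>m\<close> is the indicator of \<open>F = h{1..m}\<close>. For \<open>c\<close> times the
  indicator of a set \<open>F\<close> the sum of the \<open>l\<close> largest entries along \<open>g\<close> is
  \<open>c \<cdot> min l K(g)\<close>, where \<open>K(g)\<close> counts the \<open>i\<close> with \<open>(i, g i) \<in> F\<close>. Hence
  \<open>S(b) \<le> m/N\<close> pointwise. For \<open>a\<^sub>m\<close> the hypotheses on \<open>G\<close> give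
  \<open>\<bbbE> K = \<mu> = m/N\<close> and \<open>\<bbbE> K\<^sup>2 \<le> \<mu> + C\<^sub>G \<mu>\<^sup>2\<close>, and averaging the elementary bound
  \<open>min l k \<ge> t k - t\<^sup>2 k\<^sup>2 / (4 l)\<close> with \<open>t = 1/(1 + C\<^sub>G)\<close> gives
  \<open>\<bbbE> S(a\<^sub>m) \<ge> 3\<mu> / (4 (1 + C\<^sub>G))\<close>.\<close>

lemma expect_mono:
  "(\<And>g. g \<in> G \<Longrightarrow> X g \<le> Y g) \<Longrightarrow> expect G X \<le> expect G Y"
  unfolding expect_def by (intro divide_right_mono sum_mono) auto

lemma expect_const:
  "finite G \<Longrightarrow> G \<noteq> {} \<Longrightarrow> expect G (\<lambda>_. c) = c"
  unfolding expect_def by simp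

lemma expect_cmult: "expect G (\<lambda>g. c * X g) = c * expect G X"
  unfolding expect_def by (simp add: sum_distrib_left)

lemma expect_diff: "expect G (\<lambda>g. X g - Y g) = expect G X - expect G Y"
  unfolding expect_def by (simp add: sum_subtractf diff_divide_distrib)

lemma expect_sum: "expect G (\<lambda>g. \<Sum>p\<in>E. X g p) = (\<Sum>p\<in>E. expect G (\<lambda>g. X g p))"
  unfolding expect_def by (simp add: sum.swap[of _ G] sum_divide_distrib)

lemma expect_of_bool: "finite G \<Longrightarrow> expect G (\<lambda>g. of_bool (P g)) = prob G P"
  unfolding expect_def prob_def by (simp add: Int_def)

definition hit_count :: "nat \<Rightarrow> (nat \<times> nat) set \<Rightarrow> (nat \<Rightarrow> nat) \<Rightarrow> nat" where
  "hit_count n E g = card {i\<in>{1..n}. (i, g i) \<in> E}"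

lemma mset_map_if:
  "mset (map (\<lambda>x. if P x then c else d) xs) =
     replicate_mset (length (filter P xs)) c + replicate_mset (length (filter (\<lambda>x. \<not> P x) xs)) d"
  by (induction xs) auto

lemma sorted_vals_indicator:
  fixes c :: real
  assumes "c \<ge> 0"
  shows "sorted_vals n (\<lambda>p. if p \<in> E then c else 0) g
           = replicate (hit_count n E g) c @ replicate (n - hit_count n E g) 0"
proof -
  define P where "P i \<longleftrightarrow> (i, g i) \<in> E" for i
  let ?K = "hit_count n E g"
  have hits: "length (filter P [1..<n+1]) = ?K"
    unfolding hit_count_def P_def by (subst distinct_length_filter) (auto intro!: arg_cong[where f = card])
  moreover have "length (filter P [1..<n+1]) + length (filter (\<lambda>i. \<not> P i) [1..<n+1]) = n"
    using sum_length_filter_compl[of P "[1..<n+1]"] by simp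
  ultimately have misses: "length (filter (\<lambda>i. \<not> P i) [1..<n+1]) = n - ?K"
    by linarith
  have "sort (map (\<lambda>i. if P i then c else 0) [1..<n+1]) = replicate (n - ?K) 0 @ replicate ?K c"
  proof (rule properties_for_sort)
    show "mset (replicate (n - ?K) 0 @ replicate ?K c) = mset (map (\<lambda>i. if P i then c else 0) [1..<n+1])"
      unfolding mset_map_if hits misses by simp
    show "sorted (replicate (n - ?K) 0 @ replicate ?K c)"
      using assms by (auto simp: sorted_append)
  qed
  then show ?thesis
    unfolding sorted_vals_def P_def by simp
qed

lemma S_indicator:
  fixes c :: real
  assumes "c \<ge> 0" "l \<le> n"
  shows "S n l (\<lambda>p. if p \<in> E then c else 0) g = c * min l (hit_count n E g)"
proof -
  let ?K = "hit_count n E g"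
  have "S n l (\<lambda>p. if p \<in> E then c else 0) g = (\<Sum>k=1..l. c * of_bool (k \<le> ?K))"
    unfolding S_def Sk_def sorted_vals_indicator[OF assms(1)]
    using assms(2) by (intro sum.cong) (auto simp: nth_append)
  also have "\<dots> = c * card {1..min l ?K}"
    by (simp add: sum_distrib_left[symmetric] Int_def atLeastAtMost_def atMost_def atLeast_def)
  finally show ?thesis
    by simp
qed

lemma hit_count_eq_sum:
  assumes "E \<subseteq> {1..n} \<times> UNIV" "finite E"
  shows "real (hit_count n E g) = (\<Sum>p\<in>E. of_bool (g (fst p) = snd p))"
proof -
  have "{p\<in>E. g (fst p) = snd p} = (\<lambda>i. (i, g i)) ` {i\<in>{1..n}. (i, g i) \<in> E}"
    using assms(1) by force
  moreover have "inj_on (\<lambda>i. (i, g i)) {i\<in>{1..n}. (i, g i) \<in> E}"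
    by (auto simp: inj_on_def)
  ultimately have "hit_count n E g = card {p\<in>E. g (fst p) = snd p}"
    unfolding hit_count_def by (simp add: card_image)
  then show ?thesis
    using assms(2) by (simp add: Int_def)
qed

lemma expect_hit_count:
  assumes "finite G" "E \<subseteq> {1..n} \<times> UNIV" "finite E"
    and "\<And>p. p \<in> E \<Longrightarrow> prob G (\<lambda>g. g (fst p) = snd p) = 1 / real N"
  shows "expect G (\<lambda>g. real (hit_count n E g)) = real (card E) / real N"
  using assms by (simp add: hit_count_eq_sum expect_sum expect_of_bool del: sum_of_bool_eq)

lemma expect_hit_count_sq:
  fixes C :: real
  assumes "finite G" "E \<subseteq> {1..n} \<times> UNIV" "finite E" "C \<ge> 0"
    and "\<And>p. p \<in> E \<Longrightarrow> prob G (\<lambda>g. g (fst p) = snd p) = 1 / real N"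
    and "\<And>p q. p \<in> E \<Longrightarrow> q \<in> E \<Longrightarrow> p \<noteq> q \<Longrightarrow>
           prob G (\<lambda>g. g (fst p) = snd p \<and> g (fst q) = snd q) \<le> C / real N ^ 2"
  shows "expect G (\<lambda>g. real (hit_count n E g) ^ 2)
           \<le> real (card E) / real N + C * (real (card E) / real N) ^ 2"
proof -
  have "expect G (\<lambda>g. real (hit_count n E g) ^ 2)
      = (\<Sum>p\<in>E. \<Sum>q\<in>E. prob G (\<lambda>g. g (fst p) = snd p \<and> g (fst q) = snd q))"
    using assms(1-3)
    by (simp add: hit_count_eq_sum power2_eq_square sum_product expect_sum expect_of_bool
        flip: of_bool_conj del: sum_of_bool_eq)
  also have "\<dots> \<le> (\<Sum>p\<in>E. \<Sum>q\<in>E. (if p = q then 1 / real N else 0) + C / real N ^ 2)"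
  proof (intro sum_mono)
    fix p q assume "p \<in> E" "q \<in> E"
    then show "prob G (\<lambda>g. g (fst p) = snd p \<and> g (fst q) = snd q) \<le> (if p = q then 1 / real N else 0) + C / real N ^ 2"
      using assms(4-6) by (cases "p = q") auto
  qed
  also have "\<dots> = real (card E) / real N + C * (real (card E) / real N) ^ 2"
    using assms(3) by (simp add: sum.distrib power_divide power2_eq_square algebra_simps)
  finally show ?thesis .
qed

lemma min_ge_quadratic:
  fixes l k t :: real
  assumes "0 < l" "0 \<le> k" "0 < t" "t \<le> 1"
  shows "t * k - t\<^sup>2 / (4 * l) * k\<^sup>2 \<le> min l k"
proof (cases "k \<le> l")
  case True
  have "t * k - t\<^sup>2 / (4 * l) * k\<^sup>2 \<le> t * k"
    using assms by simp
  also have "\<dots> \<le> k"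
    using assms by (simp add: mult_left_le_one_le)
  finally show ?thesis
    using True by simp
next
  case False
  have "0 \<le> (t * k - 2 * l)\<^sup>2 / (4 * l)"
    using assms by simp
  also have "\<dots> = l - (t * k - t\<^sup>2 / (4 * l) * k\<^sup>2)"
    using assms by (simp add: field_simps power2_eq_square)
  finally show ?thesis
    using False by simp
qed

lemma expect_min_ge:
  fixes K :: "(nat \<Rightarrow> nat) \<Rightarrow> real" and l \<mu> C :: real
  assumes G: "finite G" "G \<noteq> {}" and K_nonneg: "\<And>g. g \<in> G \<Longrightarrow> K g \<ge> 0"
    and l: "1 \<le> l" "\<mu> \<le> l" and C: "C \<ge> 0"
    and mean: "expect G K = \<mu>"
    and second_moment: "expect G (\<lambda>g. (K g)\<^sup>2) \<le> \<mu> + C * \<mu>\<^sup>2"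
  shows "3 * \<mu> / (4 * (1 + C)) \<le> expect G (\<lambda>g. min l (K g))"
proof -
  define t where "t = 1 / (1 + C)"
  have t: "0 < t" "t \<le> 1" "t * (1 + C) = 1"
    using C by (auto simp: t_def)
  have "\<mu> \<ge> 0"
    using expect_mono[of G "\<lambda>_. 0" K] K_nonneg expect_const[OF G] mean by simp
  then have "\<mu> \<le> l * \<mu>" "C * \<mu>\<^sup>2 \<le> C * (l * \<mu>)"
    using l C mult_right_mono[of 1 l \<mu>] mult_left_mono[of \<mu> l "C * \<mu>"]
    by (simp_all add: power2_eq_square algebra_simps)
  then have "\<mu> + C * \<mu>\<^sup>2 \<le> l * (\<mu> * (1 + C))"
    by (simp add: algebra_simps)
  then have "t\<^sup>2 / (4 * l) * (\<mu> + C * \<mu>\<^sup>2) \<le> t\<^sup>2 / (4 * l) * (l * (\<mu> * (1 + C)))"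
    using l by (intro mult_left_mono) auto
  also have "\<dots> = t\<^sup>2 / 4 * (\<mu> * (1 + C))"
    using l by simp
  also have "\<dots> = t * \<mu> / 4 * (t * (1 + C))"
    by (simp add: power2_eq_square)
  also have "\<dots> = t * \<mu> / 4"
    using t(3) by simp
  finally have quadratic_term: "t\<^sup>2 / (4 * l) * (\<mu> + C * \<mu>\<^sup>2) \<le> t * \<mu> / 4" .
  have "3 * \<mu> / (4 * (1 + C)) = 3 / 4 * (t * \<mu>)"
    by (simp add: t_def)
  also have "\<dots> = t * \<mu> - t * \<mu> / 4"
    by simp
  also have "\<dots> \<le> t * \<mu> - t\<^sup>2 / (4 * l) * (\<mu> + C * \<mu>\<^sup>2)"
    using quadratic_term by linarith
  also have "\<dots> \<le> t * \<mu> - t\<^sup>2 / (4 * l) * expect G (\<lambda>g. (K g)\<^sup>2)"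
    using second_moment l by (simp add: mult_left_mono divide_right_mono)
  also have "\<dots> = expect G (\<lambda>g. t * K g - t\<^sup>2 / (4 * l) * (K g)\<^sup>2)"
    by (simp only: expect_diff expect_cmult mean)
  also have "\<dots> \<le> expect G (\<lambda>g. min l (K g))"
    using l t K_nonneg by (intro expect_mono min_ge_quadratic) auto
  finally show ?thesis .
qed

lemma expect_S_indicator_ge:
  fixes C :: real
  assumes G: "finite G" "G \<noteq> {}"
    and F: "F \<subseteq> {1..n} \<times> UNIV" "finite F" "card F \<le> l * N"
    and l: "1 \<le> l" "l \<le> n" and C: "C \<ge> 0"
    and unif: "\<And>i j. (i, j) \<in> F \<Longrightarrow> prob G (\<lambda>g. g i = j) = 1 / real N"
    and pair: "\<And>i1 j1 i2 j2. (i1, j1) \<in> F \<Longrightarrow> (i2, j2) \<in> F \<Longrightarrow> (i1, j1) \<noteq> (i2, j2) \<Longrightarrow>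
                 prob G (\<lambda>g. g i1 = j1 \<and> g i2 = j2) \<le> C / real N ^ 2"
  shows "3 * (real (card F) / real N) / (4 * (1 + C))
           \<le> expect G (S n l (\<lambda>p. if p \<in> F then 1 else 0))"
proof -
  have unif': "prob G (\<lambda>g. g (fst p) = snd p) = 1 / real N" if "p \<in> F" for p
    using unif[of "fst p" "snd p"] that by simp
  have pair': "prob G (\<lambda>g. g (fst p) = snd p \<and> g (fst q) = snd q) \<le> C / real N ^ 2"
    if "p \<in> F" "q \<in> F" "p \<noteq> q" for p q
    using pair[of "fst p" "snd p" "fst q" "snd q"] that by simp
  have "real (card F) / real N \<le> real l"
    using F(3) by (cases "N = 0") (simp_all add: field_simps flip: of_nat_mult)
  then have "3 * (real (card F) / real N) / (4 * (1 + C))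
               \<le> expect G (\<lambda>g. min (real l) (real (hit_count n F g)))"
    using G l C expect_hit_count[OF G(1) F(1,2) unif'] expect_hit_count_sq[OF G(1) F(1,2) C unif' pair']
    by (intro expect_min_ge) auto
  also have "\<dots> = expect G (S n l (\<lambda>p. if p \<in> F then 1 else 0))"
    using S_indicator[of 1 l n F] l by (intro arg_cong[where f = "expect G"] ext) (simp add: of_nat_min)
  finally show ?thesis .
qed

lemma amat_sum:
  assumes "inj_on h {1..L}" "m \<le> L"
  shows "(\<Sum>i=1..L. amat h m (h i)) = real m"
proof -
  have "(\<Sum>i=1..L. amat h m (h i)) = (\<Sum>i=1..L. of_bool (i \<le> m))"
    using assms by (intro sum.cong) (auto simp: amat_def inj_on_image_mem_iff)
  also have "\<dots> = real (card ({1..L} \<inter> {i. i \<le> m}))"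
    by simp
  also have "{1..L} \<inter> {i. i \<le> m} = {1..m}"
    using assms(2) by auto
  finally show ?thesis
    by simp
qed

lemma tilde_amat:
  assumes "inj_on h {1..L}" "m \<le> L"
  shows "tilde L h (amat h m) = (\<lambda>p. if p \<in> h ` {1..L} then real m / real L else 0)"
  unfolding tilde_def amat_sum[OF assms] ..

lemma expect_S_tilde_amat_le:
  assumes "finite G" "G \<noteq> {}" "inj_on h {1..L}" "m \<le> L" "l \<le> n"
  shows "expect G (S n l (tilde L h (amat h m))) \<le> real m / real L * real l"
proof -
  have c: "real m / real L \<ge> 0"
    by simp
  have "S n l (tilde L h (amat h m)) g \<le> real m / real L * real l" for g
    unfolding tilde_amat[OF assms(3,4)] S_indicator[OF c assms(5)] by (intro mult_left_mono) auto
  then have "expect G (S n l (tilde L h (amat h m))) \<le> expect G (\<lambda>_. real m / real L * real l)"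
    by (rule expect_mono)
  then show ?thesis
    using assms(1,2) by (simp add: expect_const)
qed

lemma bij_betw_initial_segment:
  assumes "bij_betw h {1..M} A" "m \<le> M"
  shows "inj_on h {1..m}" "h ` {1..m} \<subseteq> A" "card (h ` {1..m}) = m"
proof -
  show inj: "inj_on h {1..m}"
    by (rule inj_on_subset[OF bij_betw_imp_inj_on[OF assms(1)]]) (use assms(2) in auto)
  show "h ` {1..m} \<subseteq> A"
    using bij_betw_imp_surj_on[OF assms(1)] assms(2) by auto
  show "card (h ` {1..m}) = m"
    using card_image[OF inj] by simp
qed

theorem lemma3p4:
  fixes n N l :: nat and G :: "(nat \<Rightarrow> nat) set" and CG :: real
    and a :: "nat \<times> nat \<Rightarrow> real" and h :: "nat \<Rightarrow> nat \<times> nat" and m :: nat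
  assumes nN: "n \<ge> 1" "N \<ge> 1"
    and G_maps: "G \<subseteq> {1..n} \<rightarrow>\<^sub>E {1..N}"
    and G_ne: "G \<noteq> {}"
    and CG: "CG \<ge> 1"
    and unif: "\<forall>i\<in>{1..n}. \<forall>j\<in>{1..N}. prob G (\<lambda>g. g i = j) = 1 / real N"
    and pair: "\<forall>i1\<in>{1..n}. \<forall>j1\<in>{1..N}. \<forall>i2\<in>{1..n}. \<forall>j2\<in>{1..N}.
                 (i1, j1) \<noteq> (i2, j2) \<longrightarrow>
                 prob G (\<lambda>g. g i1 = j1 \<and> g i2 = j2) \<le> CG / real N ^ 2"
    and l: "1 \<le> l" "l \<le> n"
    and a_nonneg: "\<forall>p\<in>{1..n} \<times> {1..N}. a p \<ge> 0"
    and h_bij: "bij_betw h {1..n*N} ({1..n} \<times> {1..N})"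
    and h_mono: "\<forall>j. 1 \<le> j \<and> j < l*N \<longrightarrow> a (h j) \<ge> a (h (j+1))"
    and h_zero: "\<forall>j. l*N < j \<and> j \<le> n*N \<longrightarrow> a (h j) = 0"
    and m: "1 \<le> m" "m \<le> l*N"
  shows "expect G (S n l (tilde (l*N) h (amat h m)))
           \<le> (8 + 16 * CG) * expect G (S n l (amat h m))"
proof -
  have G: "finite G" "G \<noteq> {}"
    using finite_subset[OF G_maps] G_ne by (auto simp: finite_PiE)
  have lN: "l * N \<le> n * N" "m \<le> n * N"
    using l m by (simp_all add: le_trans)
  define F where "F = h ` {1..m}"
  note F = bij_betw_initial_segment[OF h_bij lN(2), folded F_def]
  have unif_F: "prob G (\<lambda>g. g i = j) = 1 / real N" if "(i, j) \<in> F" for i j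
    using subsetD[OF F(2) that] unif by simp
  have pair_F: "prob G (\<lambda>g. g i1 = j1 \<and> g i2 = j2) \<le> CG / real N ^ 2"
    if "(i1, j1) \<in> F" "(i2, j2) \<in> F" "(i1, j1) \<noteq> (i2, j2)" for i1 j1 i2 j2
    using subsetD[OF F(2) that(1)] subsetD[OF F(2) that(2)] that(3) pair by simp
  have "amat h m = (\<lambda>p. if p \<in> F then 1 else 0)"
    by (simp add: amat_def F_def)
  then have lower: "3 * (real m / real N) / (4 * (1 + CG)) \<le> expect G (S n l (amat h m))"
    using expect_S_indicator_ge[where F = F, OF G _ _ _ l _ unif_F pair_F] F m CG
    by (auto intro: finite_subset)
  have "expect G (S n l (tilde (l*N) h (amat h m))) \<le> real m / real (l*N) * real l"
    using expect_S_tilde_amat_le[OF G bij_betw_initial_segment(1)[OF h_bij lN(1)] m(2) l(2)] .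
  also have "\<dots> = real m / real N * 1"
    using l by simp
  also have "\<dots> \<le> real m / real N * ((8 + 16 * CG) * 3 / (4 * (1 + CG)))"
    using CG by (intro mult_left_mono) (simp_all add: field_simps)
  also have "\<dots> = (8 + 16 * CG) * (3 * (real m / real N) / (4 * (1 + CG)))"
    by simp
  also have "\<dots> \<le> (8 + 16 * CG) * expect G (S n l (amat h m))"
    using lower CG by (intro mult_left_mono) auto
  finally show ?thesis .
qed

end
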